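(* Let $n\ge 5$. Then for every $1\le r\le n$, no subset of $N(W_r)$ of size $n-2$ is a doubly resolving set of $L(n)$.
   Context: For $n\ge 5$, $H(n)$ is the graph with vertex set $V_1\cup V_2$, where $V_1=\{v_1,\dots,v_n\}$ and $V_2=\{v_iv_j: 1\le i<j\le n\}$, and $v_r$ is adjacent to $v_iv_j$ iff $r\in\{i,j\}$ (no other edges). $L(n)$ is the line graph of $H(n)$: its vertices are the edges $\{v_r,v_iv_j\}$ of $H(n)$ (with $r\in\{i,j\}$), two being adjacent iff they share an endpoint. For $1\le r\le n$, $W_r$ is the set of vertices of $L(n)$ of the form $\{v_r,v_iv_j\}$; it is a maximal clique of size $n-1$. $N(W_r)$ denotes the set of vertices of $L(n)$ not in $W_r$ adjacent to some vertex of $W_r$, i.e. $N(W_r)=\{\{v_k,v_iv_j\}: k\neq r,\ \{i,j\}=\{r,k\}\}$. For an ordered set $Q=\{q_1,\dots,q_l\}$ of vertices, $r(x|Q)=(d(x,q_1),\dots,d(x,q_l))$ with $d$ the shortest-path distance; $Q$ is a doubly resolving set of $G$ if for any two distinct vertices $x,y$, $r(x|Q)-r(y|Q)\neq\lambda(1,\dots,1)$ for every integer $\lambda$. *)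

theory Defs
  imports Main
begin

text \<open>Vertices of L(n): edges {v_r, v_i v_j} of H(n), encoded as pairs (r, {i,j})
  with {i,j} a 2-subset of {1..n} and r in {i,j}.\<close>
definition Lverts :: "nat \<Rightarrow> (nat \<times> nat set) set" where
  "Lverts n = {(r, e). e \<subseteq> {1..n} \<and> card e = 2 \<and> r \<in> e}"

text \<open>Adjacency in the line graph: distinct edges of H(n) sharing an endpoint
  (the same vertex v_r, or the same vertex v_i v_j).\<close>
definition Ladj :: "nat \<Rightarrow> nat \<times> nat set \<Rightarrow> nat \<times> nat set \<Rightarrow> bool" where
  "Ladj n x y \<longleftrightarrow> x \<in> Lverts n \<and> y \<in> Lverts n \<and> x \<noteq> y \<and>
     (fst x = fst y \<or> snd x = snd y)"

definition Ldist :: "nat \<Rightarrow> nat \<times> nat set \<Rightarrow> nat \<times> nat set \<Rightarrow> nat" where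
  "Ldist n x y = (LEAST k. (Ladj n ^^ k) x y)"

definition Wset :: "nat \<Rightarrow> nat \<Rightarrow> (nat \<times> nat set) set" where
  "Wset n r = {x \<in> Lverts n. fst x = r}"

definition NW :: "nat \<Rightarrow> nat \<Rightarrow> (nat \<times> nat set) set" where
  "NW n r = {y \<in> Lverts n - Wset n r. \<exists>x \<in> Wset n r. Ladj n x y}"

definition doubly_resolving :: "nat \<Rightarrow> (nat \<times> nat set) set \<Rightarrow> bool" where
  "doubly_resolving n Q \<longleftrightarrow> Q \<subseteq> Lverts n \<and>
     (\<forall>x \<in> Lverts n. \<forall>y \<in> Lverts n. x \<noteq> y \<longrightarrow>
        \<not> (\<exists>c::int. \<forall>q \<in> Q. int (Ldist n x q) - int (Ldist n y q) = c))"

end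

theory Submission
  imports Defs
begin

text \<open>N(W_r) consists of the n - 1 vertices (k, {r,k}), k \<noteq> r, so a set Q of size n - 2 inside it
  misses some p = (m, {r,m}). The vertex (r, {r,m}) of W_r is at distance 2 from every
  (k, {r,k}) with k \<noteq> m (through (r, {r,k})), while p is at distance 3 from it (through
  (r, {r,m}) and (r, {r,k})). Hence the distance vectors of (r, {r,m}) and p to Q differ by
  the constant vector -1, and Q does not doubly resolve this pair.\<close>

lemma relpowp_2_iff: "(R ^^ 2) x y \<longleftrightarrow> (\<exists>z. R x z \<and> R z y)"
  by (auto simp: numeral_2_eq_2 relcompp_apply)

lemma relpowp_3_iff: "(R ^^ 3) x y \<longleftrightarrow> (\<exists>z w. R x z \<and> R z w \<and> R w y)"
  by (auto simp: numeral_3_eq_3 relcompp_apply)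

lemma Ldist_eqI:
  assumes "(Ladj n ^^ k) x y" and "\<And>j. j < k \<Longrightarrow> \<not> (Ladj n ^^ j) x y"
  shows "Ldist n x y = k"
  unfolding Ldist_def using assms by (intro Least_equality) (auto simp: not_less[symmetric])

lemma Lverts_edge_mem:
  assumes "r \<in> {1..n}" "m \<in> {1..n}" "m \<noteq> r"
  shows "(r, {r, m}) \<in> Lverts n" and "(m, {r, m}) \<in> Lverts n"
  using assms by (auto simp: Lverts_def)

lemma card_2_mem_eq: "card e = 2 \<Longrightarrow> r \<in> e \<Longrightarrow> k \<in> e \<Longrightarrow> k \<noteq> r \<Longrightarrow> e = {r, k}"
  by (metis card_2_iff empty_iff insert_commute insert_iff)

lemma NW_eq:
  assumes "r \<in> {1..n}"
  shows "NW n r = (\<lambda>k. (k, {r, k})) ` ({1..n} - {r})"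
proof (intro equalityI subsetI)
  fix q assume q: "q \<in> NW n r"
  obtain k e where qe: "q = (k, e)" by force
  from q obtain x where x: "x \<in> Wset n r" "Ladj n x q" "fst q \<noteq> r"
    unfolding NW_def Wset_def by auto
  have "r \<in> e" using x qe unfolding Wset_def Ladj_def Lverts_def by auto
  moreover have "k \<in> e" "card e = 2" "e \<subseteq> {1..n}" "k \<noteq> r"
    using x qe unfolding Ladj_def Lverts_def by auto
  ultimately show "q \<in> (\<lambda>k. (k, {r, k})) ` ({1..n} - {r})"
    using qe card_2_mem_eq[of e r k] by auto
next
  fix q assume "q \<in> (\<lambda>k. (k, {r, k})) ` ({1..n} - {r})"
  then obtain k where k: "q = (k, {r, k})" "k \<in> {1..n}" "k \<noteq> r" by blast
  then have "(r, {r, k}) \<in> Wset n r" "Ladj n (r, {r, k}) q"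
    using assms Lverts_edge_mem[of r n k] by (auto simp: Wset_def Ladj_def)
  then show "q \<in> NW n r"
    using k assms Lverts_edge_mem[of r n k] by (auto simp: NW_def Wset_def)
qed

lemma card_NW:
  assumes "r \<in> {1..n}"
  shows "card (NW n r) = n - 1"
proof -
  have "inj_on (\<lambda>k. (k, {r, k})) ({1..n} - {r})"
    by (rule inj_onI) simp
  then show ?thesis
    using assms by (simp add: NW_eq card_image)
qed

lemma Ldist_W_to_NW:
  assumes "r \<in> {1..n}" "m \<in> {1..n}" "k \<in> {1..n}" "m \<noteq> r" "k \<noteq> r" "k \<noteq> m"
  shows "Ldist n (r, {r, m}) (k, {r, k}) = 2"
proof (rule Ldist_eqI)
  show "(Ladj n ^^ 2) (r, {r, m}) (k, {r, k})"
    unfolding relpowp_2_iff using assms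
    by (intro exI[of _ "(r, {r, k})"])
      (auto simp: Ladj_def Lverts_edge_mem doubleton_eq_iff)
  fix j :: nat assume "j < 2"
  then have "j = 0 \<or> j = 1" by auto
  then show "\<not> (Ladj n ^^ j) (r, {r, m}) (k, {r, k})"
    using assms by (auto simp: Ladj_def doubleton_eq_iff)
qed

lemma Ldist_NW_to_NW:
  assumes "r \<in> {1..n}" "m \<in> {1..n}" "k \<in> {1..n}" "m \<noteq> r" "k \<noteq> r" "k \<noteq> m"
  shows "Ldist n (m, {r, m}) (k, {r, k}) = 3"
proof (rule Ldist_eqI)
  show "(Ladj n ^^ 3) (m, {r, m}) (k, {r, k})"
    unfolding relpowp_3_iff using assms
    by (intro exI[of _ "(r, {r, m})"] exI[of _ "(r, {r, k})"])
      (auto simp: Ladj_def Lverts_edge_mem doubleton_eq_iff)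
  \<comment> \<open>A common neighbour would share vertex m or edge {r,m} with one end and vertex k or
    edge {r,k} with the other, which is impossible for k \<noteq> m.\<close>
  have "\<not> (Ladj n ^^ 2) (m, {r, m}) (k, {r, k})"
  proof
    assume "(Ladj n ^^ 2) (m, {r, m}) (k, {r, k})"
    then obtain a e where
      "Ladj n (m, {r, m}) (a, e)" "Ladj n (a, e) (k, {r, k})" "a \<in> e"
      unfolding relpowp_2_iff by (auto simp: Ladj_def Lverts_def)
    with assms show False by (auto simp: Ladj_def doubleton_eq_iff)
  qed
  moreover fix j :: nat assume "j < 3"
  then have "j = 0 \<or> j = 1 \<or> j = 2" by auto
  ultimately show "\<not> (Ladj n ^^ j) (m, {r, m}) (k, {r, k})"
    using assms by (auto simp: Ladj_def doubleton_eq_iff)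
qed

lemma not_doubly_resolving_psubset_NW:
  assumes r: "r \<in> {1..n}" and Q: "Q \<subset> NW n r"
  shows "\<not> doubly_resolving n Q"
proof
  assume resolving: "doubly_resolving n Q"
  obtain p where "p \<in> NW n r" "p \<notin> Q"
    using Q by blast
  then obtain m where m: "m \<in> {1..n}" "m \<noteq> r" "(m, {r, m}) \<notin> Q"
    unfolding NW_eq[OF r] by blast
  have "int (Ldist n (r, {r, m}) q) - int (Ldist n (m, {r, m}) q) = -1" if "q \<in> Q" for q
  proof -
    obtain k where k: "q = (k, {r, k})" "k \<in> {1..n}" "k \<noteq> r"
      using \<open>q \<in> Q\<close> Q unfolding NW_eq[OF r] by blast
    with m \<open>q \<in> Q\<close> have "k \<noteq> m" by auto
    with r m k show ?thesis
      by (simp add: Ldist_W_to_NW Ldist_NW_to_NW)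
  qed
  moreover have "(r, {r, m}) \<in> Lverts n" "(m, {r, m}) \<in> Lverts n"
    using r m Lverts_edge_mem by auto
  moreover have "(r, {r, m}) \<noteq> (m, {r, m})"
    using m(2) by simp
  ultimately show False
    using resolving unfolding doubly_resolving_def by blast
qed

theorem lemma3p4:
  fixes n r :: nat and Q :: "(nat \<times> nat set) set"
  assumes "n \<ge> 5" and "1 \<le> r" and "r \<le> n"
    and "Q \<subseteq> NW n r" and "card Q = n - 2"
  shows "\<not> doubly_resolving n Q"
proof (rule not_doubly_resolving_psubset_NW)
  show r: "r \<in> {1..n}" using assms(2,3) by simp
  have "card Q \<noteq> card (NW n r)"
    using assms(1,5) card_NW[OF r] by simp
  then show "Q \<subset> NW n r"
    using assms(4) by auto
qed

end
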